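(* Let bidder $i$ have a constraint-homogeneous valuation with interest set $S$ and per-unit value $\hat v$, let $s^*=\lceil |S|/2\rceil$, and let $b_i'$ be the Core Deviation of $i$. For every strategy profile $b$, if bidder $i$ wins at least $s^*$ items of $S$ in the profile $(b_i'(b_i),b_{-i})$, then $u_i(b_i'(b_i),b_{-i};v_i)\ge \tfrac12 s^*\hat v-P_i(b)$.
   Context: Draft auction: $n$ bidders, items $[m]$; rounds are run while the set $I$ of remaining items is nonempty: each bidder submits a sealed bid $b_i\ge0$ and a set $X_i\subseteq I$; the highest bidder (ties arbitrary) gets her set (removed from $I$) and pays her bid times its size; winner, winning bid and bundle are announced. A strategy maps observed histories to actions. $u_i(b;v_i)$ is quasi-linear utility, $P_i(b)$ total payment of $i$ under $b$. Constraint-homogeneous valuation: $v(T)=\hat v|T\cap S|$. Items of $S$ are called units. For the original strategy $b_i$ (within profile $b$), $b_{it}$ denotes $i$'s bid in auction (round) $t$, $k_{it}$ the number of units she obtains in auction $t$ and $k_{i,<t}$ the number obtained before auction $t$. Core Deviation $b_i'$: let $b_i^*=\hat v/2$. In every auction $t$ she bids $\max\{b_i^*,b_{it}\}$. If she wins with bid $b_i^*$ (i.e. $b_i^*>b_{it}$), she takes $s^*-k_{i,<t}$ units of $S$ and drops out. If she wins with bid $b_{it}$, she takes exactly what she took under $b_i$ in auction $t$ (the $k_{it}$ units and any other items). She keeps bidding this way until she has acquired $s^*$ units or the remaining units are not enough to complete $s^*$ units. *)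

theory Defs
  imports Complex_Main
begin

text \<open>Bidders are 0..n-1, items are 0..m-1.
  A public history is the list of announcements (winner, winning bid, bundle),
  in chronological order. A strategy maps observed histories to actions (bid, set).\<close>

type_synonym hist = "(nat \<times> real \<times> nat set) list"
type_synonym strat = "hist \<Rightarrow> real \<times> nat set"

definition remaining :: "nat \<Rightarrow> hist \<Rightarrow> nat set" where
  "remaining m h = {..<m} - (\<Union>e\<in>set h. snd (snd e))"

definition won_in :: "nat \<Rightarrow> hist \<Rightarrow> nat set" where
  "won_in i h = (\<Union>e\<in>{e\<in>set h. fst e = i}. snd (snd e))"

definition valid_strategy :: "nat \<Rightarrow> strat \<Rightarrow> bool" where
  "valid_strategy m s = (\<forall>h. 0 \<le> fst (s h) \<and> snd (s h) \<subseteq> remaining m h)"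

text \<open>One round at history h: the highest bidder wins; ties are broken by a
  (history-dependent) priority order prio h (lower value = higher priority).\<close>
definition round_outcome ::
  "nat \<Rightarrow> (hist \<Rightarrow> nat \<Rightarrow> nat) \<Rightarrow> (nat \<Rightarrow> strat) \<Rightarrow> hist \<Rightarrow> nat \<times> real \<times> nat set" where
  "round_outcome n prio b h =
     (let top = Max ((\<lambda>j. fst (b j h)) ` {..<n});
          w = (ARG_MIN (prio h) j. j < n \<and> fst (b j h) = top)
      in (w, fst (b w h), snd (b w h)))"

primrec play ::
  "nat \<Rightarrow> nat \<Rightarrow> (hist \<Rightarrow> nat \<Rightarrow> nat) \<Rightarrow> (nat \<Rightarrow> strat) \<Rightarrow> nat \<Rightarrow> hist" where
  "play n m prio b 0 = []"
| "play n m prio b (Suc t) =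
     (let h = play n m prio b t in
      if remaining m h = {} then h else h @ [round_outcome n prio b h])"

definition round_run :: "nat \<Rightarrow> nat \<Rightarrow> (hist \<Rightarrow> nat \<Rightarrow> nat) \<Rightarrow> (nat \<Rightarrow> strat) \<Rightarrow> nat \<Rightarrow> bool" where
  "round_run n m prio b t = (remaining m (play n m prio b t) \<noteq> {})"

definition outcome ::
  "nat \<Rightarrow> nat \<Rightarrow> (hist \<Rightarrow> nat \<Rightarrow> nat) \<Rightarrow> (nat \<Rightarrow> strat) \<Rightarrow> nat \<Rightarrow> nat \<times> real \<times> nat set" where
  "outcome n m prio b t = round_outcome n prio b (play n m prio b t)"

definition items_won :: "nat \<Rightarrow> nat \<Rightarrow> (hist \<Rightarrow> nat \<Rightarrow> nat) \<Rightarrow> (nat \<Rightarrow> strat) \<Rightarrow> nat \<Rightarrow> nat set" where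
  "items_won n m prio b i =
     (\<Union>t\<in>{t. round_run n m prio b t \<and> fst (outcome n m prio b t) = i}. snd (snd (outcome n m prio b t)))"

text \<open>total payment P_i(b): winning bid times bundle size, summed over the rounds i wins
  (rounds with an empty bundle cost nothing and are omitted, so the index set is finite)\<close>
definition payment :: "nat \<Rightarrow> nat \<Rightarrow> (hist \<Rightarrow> nat \<Rightarrow> nat) \<Rightarrow> (nat \<Rightarrow> strat) \<Rightarrow> nat \<Rightarrow> real" where
  "payment n m prio b i =
     (\<Sum>t\<in>{t. round_run n m prio b t \<and> fst (outcome n m prio b t) = i
              \<and> snd (snd (outcome n m prio b t)) \<noteq> {}}.
        fst (snd (outcome n m prio b t)) * real (card (snd (snd (outcome n m prio b t)))))"

definition ch_val :: "real \<Rightarrow> nat set \<Rightarrow> nat set \<Rightarrow> real" where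
  "ch_val vhat S T = vhat * real (card (T \<inter> S))"

definition utility ::
  "nat \<Rightarrow> nat \<Rightarrow> (hist \<Rightarrow> nat \<Rightarrow> nat) \<Rightarrow> (nat \<Rightarrow> strat) \<Rightarrow> nat \<Rightarrow> (nat set \<Rightarrow> real) \<Rightarrow> real" where
  "utility n m prio b i v = v (items_won n m prio b i) - payment n m prio b i"

definition sstar :: "nat set \<Rightarrow> nat" where
  "sstar S = nat \<lceil>real (card S) / 2\<rceil>"

text \<open>Core Deviation of bidder i built from her original strategy bi.
  pick A k is the (arbitrary) choice of k units out of the remaining units A.
  k = units obtained so far, r = units still available.\<close>
definition core_deviation ::
  "nat \<Rightarrow> nat set \<Rightarrow> real \<Rightarrow> (nat set \<Rightarrow> nat \<Rightarrow> nat set) \<Rightarrow> nat \<Rightarrow> strat \<Rightarrow> strat" where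
  "core_deviation m S vhat pick i bi h =
     (let bst = vhat / 2; s = sstar S;
          k = card (won_in i h \<inter> S); r = card (S \<inter> remaining m h)
      in if k < s \<and> s \<le> k + r
         then (if bst > fst (bi h) then (bst, pick (S \<inter> remaining m h) (s - k)) else bi h)
         else (0, {}))"

end

theory Submission
  imports Defs
begin

text \<open>While bidder \<open>i\<close> is still collecting her \<open>sstar S\<close> units, the auction under the
  Core Deviation produces exactly the history it produces under \<open>b\<close>: in each round she either
  submits her original action, or she raises her bid to \<open>vhat/2\<close>; if she then loses, the
  winner and its action are unchanged (ties are broken by a strict order), and if she wins, she
  completes her \<open>sstar S\<close> units and drops out. Hence every payment under the deviation is also
  a payment under \<open>b\<close>, except for a single one of at most \<open>sstar S * vhat/2\<close>. As she ends up
  with at least \<open>sstar S\<close> units worth \<open>vhat\<close> each, her utility is at least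
  \<open>sstar S * vhat - sstar S * vhat/2 - P\<^sub>i(b)\<close>.\<close>

lemma play_Suc_run:
  "round_run n m prio b t \<Longrightarrow> play n m prio b (Suc t) = play n m prio b t @ [outcome n m prio b t]"
  by (simp add: round_run_def outcome_def Let_def)

lemma play_Suc_not_run:
  "\<not> round_run n m prio b t \<Longrightarrow> play n m prio b (Suc t) = play n m prio b t"
  by (simp add: round_run_def Let_def)

lemma set_play_mono: "t \<le> t' \<Longrightarrow> set (play n m prio b t) \<subseteq> set (play n m prio b t')"
proof (induction t' rule: dec_induct)
  case (step t')
  then show ?case by (auto simp: Let_def)
qed simp

lemma remaining_snoc: "remaining m (h @ [e]) = remaining m h - snd (snd e)"
  by (auto simp: remaining_def)

lemma won_in_snoc: "won_in i (h @ [e]) = won_in i h \<union> (if fst e = i then snd (snd e) else {})"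
  by (auto simp: won_in_def)

lemma won_in_remaining_disjoint: "won_in i h \<inter> remaining m h = {}"
  by (auto simp: won_in_def remaining_def)

lemma round_outcome_snd:
  "snd (round_outcome n prio b h) = b (fst (round_outcome n prio b h)) h"
  by (simp add: round_outcome_def Let_def)

lemma round_outcome_cong:
  "(\<And>j. b j h = b' j h) \<Longrightarrow> round_outcome n prio b h = round_outcome n prio b' h"
  by (simp add: round_outcome_def)

lemma round_winner:
  fixes b :: "nat \<Rightarrow> strat" and h :: hist
  assumes "0 < n"
  defines "top_bid \<equiv> Max ((\<lambda>j. fst (b j h)) ` {..<n})"
  shows "fst (round_outcome n prio b h) < n"
    and "fst (b (fst (round_outcome n prio b h)) h) = top_bid"
    and "\<And>j. j < n \<Longrightarrow> fst (b j h) = top_bid \<Longrightarrow> prio h (fst (round_outcome n prio b h)) \<le> prio h j"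
proof -
  let ?P = "\<lambda>j. j < n \<and> fst (b j h) = top_bid"
  have "top_bid \<in> (\<lambda>j. fst (b j h)) ` {..<n}"
    unfolding top_bid_def using assms(1) by (intro Max_in) auto
  then obtain j where "?P j" by auto
  then have "?P (arg_min (prio h) ?P)" "\<And>k. ?P k \<Longrightarrow> prio h (arg_min (prio h) ?P) \<le> prio h k"
    using arg_min_nat_lemma[of ?P j "prio h"] by auto
  then show "fst (round_outcome n prio b h) < n"
    and "fst (b (fst (round_outcome n prio b h)) h) = top_bid"
    and "\<And>j. j < n \<Longrightarrow> fst (b j h) = top_bid \<Longrightarrow> prio h (fst (round_outcome n prio b h)) \<le> prio h j"
    by (simp_all add: round_outcome_def Let_def top_bid_def)
qed

lemma round_outcome_raise_losing_bid:
  assumes "0 < n" and inj: "inj_on (prio h) {..<n}"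
    and others: "\<And>j. j \<noteq> i \<Longrightarrow> b' j h = b j h"
    and raised: "fst (b i h) < fst (b' i h)"
    and loses: "fst (round_outcome n prio b' h) \<noteq> i"
  shows "round_outcome n prio b h = round_outcome n prio b' h"
proof -
  let ?w = "fst (round_outcome n prio b' h)"
  let ?top = "Max ((\<lambda>j. fst (b j h)) ` {..<n})"
  let ?top' = "Max ((\<lambda>j. fst (b' j h)) ` {..<n})"
  have w: "?w < n" "fst (b ?w h) = ?top'"
    using round_winner(1,2)[OF \<open>0 < n\<close>, where b = b' and h = h and prio = prio] others[OF loses]
    by auto
  have le_top': "fst (b j h) \<le> ?top'" if "j < n" for j
  proof -
    have "fst (b' j h) \<le> ?top'" using that by (intro Max_ge) auto
    then show ?thesis using others[of j] raised by (cases "j = i") auto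
  qed
  have top: "?top = ?top'"
    using w le_top' by (intro Max_eqI) (auto intro!: image_eqI[where x = ?w])
  let ?P = "\<lambda>j. j < n \<and> fst (b j h) = ?top"
  have "i \<noteq> j" if "?P j" for j
  proof
    assume "i = j"
    then have "fst (b' i h) \<le> ?top'" using that by (intro Max_ge) auto
    moreover have "fst (b i h) = ?top'" using \<open>i = j\<close> that top by simp
    ultimately show False using raised by linarith
  qed
  then have "prio h ?w \<le> prio h j" if "?P j" for j
    using that round_winner(3)[OF \<open>0 < n\<close>, where b = b' and h = h and prio = prio and j = j]
      others top by fastforce
  then have "prio h (arg_min (prio h) ?P) = prio h ?w"
    using w top by (intro arg_min_equality) auto
  moreover have "arg_min (prio h) ?P < n"
    using w top by (intro conjunct1[OF arg_min_natI]) auto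
  ultimately have "arg_min (prio h) ?P = ?w"
    using inj w(1) by (auto dest: inj_onD)
  then show ?thesis
    using round_outcome_snd[of n prio b' h] others[OF loses]
    by (simp add: round_outcome_def Let_def prod_eq_iff)
qed

lemma round_outcome_valid:
  assumes "0 < n" and "\<forall>j<n. valid_strategy m (b j)"
  shows "snd (snd (round_outcome n prio b h)) \<subseteq> remaining m h"
    and "0 \<le> fst (snd (round_outcome n prio b h))"
  using assms round_winner(1)[OF assms(1), where b = b and h = h and prio = prio]
    round_outcome_snd[of n prio b h]
  by (auto simp: valid_strategy_def)

definition paid_rounds :: "nat \<Rightarrow> nat \<Rightarrow> (hist \<Rightarrow> nat \<Rightarrow> nat) \<Rightarrow> (nat \<Rightarrow> strat) \<Rightarrow> nat \<Rightarrow> nat set"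
  where "paid_rounds n m prio b i =
    {t. round_run n m prio b t \<and> fst (outcome n m prio b t) = i \<and> snd (snd (outcome n m prio b t)) \<noteq> {}}"

definition round_price :: "nat \<Rightarrow> nat \<Rightarrow> (hist \<Rightarrow> nat \<Rightarrow> nat) \<Rightarrow> (nat \<Rightarrow> strat) \<Rightarrow> nat \<Rightarrow> real"
  where "round_price n m prio b t =
    fst (snd (outcome n m prio b t)) * real (card (snd (snd (outcome n m prio b t))))"

lemma payment_eq_sum_round_price:
  "payment n m prio b i = (\<Sum>t\<in>paid_rounds n m prio b i. round_price n m prio b t)"
  by (simp add: payment_def paid_rounds_def round_price_def)

lemma round_price_nonneg:
  "0 < n \<Longrightarrow> \<forall>j<n. valid_strategy m (b j) \<Longrightarrow> 0 \<le> round_price n m prio b t"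
  using round_outcome_valid(2) by (simp add: round_price_def outcome_def)

lemma finite_paid_rounds:
  assumes "0 < n" and "\<forall>j<n. valid_strategy m (b j)"
  shows "finite (paid_rounds n m prio b i)"
proof -
  let ?bundle = "\<lambda>t. snd (snd (outcome n m prio b t))"
  have bundle_remaining: "?bundle t \<subseteq> remaining m (play n m prio b t)" for t
    using round_outcome_valid(1)[OF assms] by (simp add: outcome_def)
  have "?bundle t1 \<inter> remaining m (play n m prio b t2) = {}"
    if "t1 < t2" "round_run n m prio b t1" for t1 t2
  proof -
    have "outcome n m prio b t1 \<in> set (play n m prio b (Suc t1))"
      using play_Suc_run[OF that(2)] by simp
    also have "\<dots> \<subseteq> set (play n m prio b t2)"
      using that(1) by (intro set_play_mono) simp
    finally show ?thesis by (auto simp: remaining_def)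
  qed
  \<comment> \<open>bundles of different rounds are disjoint, so a nonempty bundle determines its round\<close>
  then have "inj_on ?bundle (paid_rounds n m prio b i)"
    using bundle_remaining unfolding paid_rounds_def
    by (intro linorder_inj_onI') blast
  moreover have "?bundle ` paid_rounds n m prio b i \<subseteq> Pow {..<m}"
    using bundle_remaining by (auto simp: remaining_def)
  ultimately show ?thesis
    by (metis finite_Pow_iff finite_imageD finite_lessThan finite_subset)
qed

context
  fixes n m i :: nat and S :: "nat set" and vhat :: real
    and b :: "nat \<Rightarrow> strat" and prio :: "hist \<Rightarrow> nat \<Rightarrow> nat"
    and pick :: "nat set \<Rightarrow> nat \<Rightarrow> nat set"
  assumes bidder: "i < n"
    and S_items: "S \<subseteq> {..<m}"
    and vhat_nonneg: "0 \<le> vhat"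
    and valid: "\<forall>j<n. valid_strategy m (b j)"
    and prio_inj: "\<forall>h. inj_on (prio h) {..<n}"
    and pick: "\<forall>A k. finite A \<and> k \<le> card A \<longrightarrow> pick A k \<subseteq> A \<and> card (pick A k) = k"
begin

abbreviation "dev \<equiv> b(i := core_deviation m S vhat pick i (b i))"

abbreviation "active h \<equiv> card (won_in i h \<inter> S) < sstar S \<and>
  sstar S \<le> card (won_in i h \<inter> S) + card (S \<inter> remaining m h)"

abbreviation "grab h \<equiv> pick (S \<inter> remaining m h) (sstar S - card (won_in i h \<inter> S))"

lemma dev_action:
  "core_deviation m S vhat pick i (b i) h =
    (if active h then if fst (b i h) < vhat/2 then (vhat/2, grab h) else b i h else (0, {}))"
  by (simp add: core_deviation_def Let_def)

lemma finite_S: "finite S"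
  using S_items finite_subset by blast

lemma grab_units:
  assumes "active h"
  shows "grab h \<subseteq> S \<inter> remaining m h" and "card (grab h) = sstar S - card (won_in i h \<inter> S)"
proof -
  have "sstar S - card (won_in i h \<inter> S) \<le> card (S \<inter> remaining m h)"
    using assms by linarith
  then show "grab h \<subseteq> S \<inter> remaining m h" and "card (grab h) = sstar S - card (won_in i h \<inter> S)"
    using pick finite_S by auto
qed

lemma inactive_after_grab:
  assumes "active h"
  shows "\<not> active (h @ [(i, vhat/2, grab h)])"
proof -
  let ?W = "won_in i h \<inter> S"
  note grab = grab_units[OF assms]
  have "won_in i (h @ [(i, vhat/2, grab h)]) \<inter> S = ?W \<union> grab h"
    using grab(1) by (auto simp: won_in_snoc)
  moreover have "?W \<inter> grab h = {}"
    using grab(1) won_in_remaining_disjoint[of i h m] by blast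
  moreover have "finite ?W" "finite (grab h)"
    using finite_S grab(1) finite_subset by auto
  ultimately have "card (won_in i (h @ [(i, vhat/2, grab h)]) \<inter> S) = card ?W + card (grab h)"
    by (simp add: card_Un_disjoint)
  then show ?thesis using grab(2) assms by simp
qed

lemma inactive_play_dev_Suc:
  assumes inactive: "\<not> active (play n m prio dev t)"
  shows "\<not> active (play n m prio dev (Suc t))"
proof (cases "round_run n m prio dev t")
  case False
  then show ?thesis using inactive play_Suc_not_run by metis
next
  case True
  let ?h = "play n m prio dev t" and ?o = "outcome n m prio dev t"
  have play: "play n m prio dev (Suc t) = ?h @ [?o]" using play_Suc_run[OF True] .
  have "snd (snd ?o) = {}" if "fst ?o = i"
    using that round_outcome_snd[of n prio dev ?h] dev_action[of ?h] inactive
    by (simp add: outcome_def)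
  then have won: "won_in i (play n m prio dev (Suc t)) = won_in i ?h"
    unfolding play won_in_snoc by auto
  have "card (S \<inter> remaining m (play n m prio dev (Suc t))) \<le> card (S \<inter> remaining m ?h)"
    unfolding play remaining_snoc using finite_S by (intro card_mono) auto
  then show ?thesis using inactive won by auto
qed

lemma inactive_play_dev_mono:
  assumes "\<not> active (play n m prio dev t)" and "t \<le> t'"
  shows "\<not> active (play n m prio dev t')"
  using assms(2) by (induction t' rule: dec_induct) (use assms(1) inactive_play_dev_Suc in blast)+

lemma round_outcome_dev_keep:
  "active h \<Longrightarrow> \<not> fst (b i h) < vhat/2 \<Longrightarrow> round_outcome n prio dev h = round_outcome n prio b h"
  by (rule round_outcome_cong) (simp add: dev_action)

lemma round_outcome_dev_grab:
  assumes "active h" "fst (b i h) < vhat/2" "fst (round_outcome n prio dev h) = i"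
  shows "round_outcome n prio dev h = (i, vhat/2, grab h)"
  using assms round_outcome_snd[of n prio dev h] dev_action[of h] by (simp add: prod_eq_iff)

lemma round_outcome_dev_lose:
  assumes "active h" "fst (b i h) < vhat/2" "fst (round_outcome n prio dev h) \<noteq> i"
  shows "round_outcome n prio dev h = round_outcome n prio b h"
  using assms bidder prio_inj dev_action[of h]
  by (intro round_outcome_raise_losing_bid[symmetric]) auto

lemma play_dev_eq_or_inactive:
  "play n m prio dev t = play n m prio b t \<or> \<not> active (play n m prio dev t)"
proof (induction t)
  case 0
  then show ?case by simp
next
  case (Suc t)
  let ?h = "play n m prio b t"
  show ?case
  proof (cases "active (play n m prio dev t)")
    case False
    then show ?thesis using inactive_play_dev_Suc by blast
  next
    case True
    with Suc.IH have eq: "play n m prio dev t = ?h" by blast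
    with True have active: "active ?h" by simp
    show ?thesis
    proof (cases "round_run n m prio b t")
      case False
      then have "\<not> round_run n m prio dev t" using eq by (simp add: round_run_def)
      with False show ?thesis using eq play_Suc_not_run by metis
    next
      case True
      then have "round_run n m prio dev t" using eq by (simp add: round_run_def)
      then have dev_next: "play n m prio dev (Suc t) = ?h @ [round_outcome n prio dev ?h]"
        using eq play_Suc_run by (metis outcome_def)
      have b_next: "play n m prio b (Suc t) = ?h @ [round_outcome n prio b ?h]"
        using play_Suc_run[OF True] by (simp add: outcome_def)
      consider "round_outcome n prio dev ?h = round_outcome n prio b ?h"
        | "round_outcome n prio dev ?h = (i, vhat/2, grab ?h)"
        using round_outcome_dev_keep[OF active] round_outcome_dev_grab[OF active]
          round_outcome_dev_lose[OF active] by blast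
      then show ?thesis
        by cases (metis dev_next b_next, metis dev_next inactive_after_grab[OF active])
    qed
  qed
qed

lemma paid_round_dev_agrees:
  assumes "t \<in> paid_rounds n m prio dev i"
  shows "active (play n m prio b t)" and "play n m prio dev t = play n m prio b t"
proof -
  let ?h = "play n m prio dev t"
  have "snd (round_outcome n prio dev ?h) = dev i ?h"
    using assms round_outcome_snd[of n prio dev ?h] by (simp add: paid_rounds_def outcome_def)
  then have "active ?h"
    using assms dev_action[of ?h] by (auto simp: paid_rounds_def outcome_def split: if_splits)
  then show "play n m prio dev t = play n m prio b t"
    using play_dev_eq_or_inactive by blast
  with \<open>active ?h\<close> show "active (play n m prio b t)" by simp
qed

lemma paid_round_dev_keep:
  assumes "t \<in> paid_rounds n m prio dev i" and "\<not> fst (b i (play n m prio b t)) < vhat/2"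
  shows "t \<in> paid_rounds n m prio b i" and "round_price n m prio dev t = round_price n m prio b t"
proof -
  note agree = paid_round_dev_agrees[OF assms(1)]
  have "outcome n m prio dev t = outcome n m prio b t"
    using round_outcome_dev_keep[OF agree(1) assms(2)] agree(2) by (simp add: outcome_def)
  moreover have "round_run n m prio dev t \<longleftrightarrow> round_run n m prio b t"
    using agree(2) by (simp add: round_run_def)
  ultimately show "t \<in> paid_rounds n m prio b i"
    and "round_price n m prio dev t = round_price n m prio b t"
    using assms(1) by (simp_all add: paid_rounds_def round_price_def)
qed

text \<open>The rounds she wins with the bid \<open>vhat/2\<close> rather than with her original bid.\<close>

abbreviation "grab_rounds \<equiv> {t \<in> paid_rounds n m prio dev i. fst (b i (play n m prio b t)) < vhat/2}"

lemma grab_round_outcome: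
  assumes "t \<in> grab_rounds"
  shows "outcome n m prio dev t = (i, vhat/2, grab (play n m prio b t))"
    and "\<not> active (play n m prio dev (Suc t))"
proof -
  have paid: "t \<in> paid_rounds n m prio dev i" and low: "fst (b i (play n m prio b t)) < vhat/2"
    using assms by auto
  note agree = paid_round_dev_agrees[OF paid]
  have run: "round_run n m prio dev t" and wins: "fst (outcome n m prio dev t) = i"
    using paid by (auto simp: paid_rounds_def)
  show outcome: "outcome n m prio dev t = (i, vhat/2, grab (play n m prio b t))"
    using round_outcome_dev_grab[OF agree(1) low] wins agree(2) unfolding outcome_def by metis
  have "play n m prio dev (Suc t) = play n m prio b t @ [(i, vhat/2, grab (play n m prio b t))]"
    using play_Suc_run[OF run] outcome agree(2) by metis
  then show "\<not> active (play n m prio dev (Suc t))"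
    using inactive_after_grab[OF agree(1)] by metis
qed

lemma grab_rounds_at_most_one: "grab_rounds = {} \<or> (\<exists>t. grab_rounds = {t})"
proof -
  have no_later: False if "u1 \<in> grab_rounds" "u2 \<in> grab_rounds" "u1 < u2" for u1 u2
  proof -
    have "\<not> active (play n m prio dev u2)"
      using inactive_play_dev_mono[OF grab_round_outcome(2)[OF that(1)]] that(3) by simp
    moreover have "u2 \<in> paid_rounds n m prio dev i" using that(2) by blast
    note agree = paid_round_dev_agrees[OF this]
    ultimately show False using agree by simp
  qed
  have unique: "t1 = t2" if "t1 \<in> grab_rounds" "t2 \<in> grab_rounds" for t1 t2
  proof (rule ccontr)
    assume "t1 \<noteq> t2"
    then have "t1 < t2 \<or> t2 < t1" by arith
    then show False using no_later that by blast
  qed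
  show ?thesis
  proof (cases "grab_rounds = {}")
    case False
    then obtain t where "t \<in> grab_rounds" by blast
    with unique have "grab_rounds = {t}" by blast
    then show ?thesis by blast
  qed simp
qed

lemma grab_round_price_le:
  assumes "t \<in> grab_rounds"
  shows "round_price n m prio dev t \<le> vhat/2 * real (sstar S)"
proof -
  have "active (play n m prio b t)"
    using assms paid_round_dev_agrees(1) by blast
  then have "card (grab (play n m prio b t)) \<le> sstar S"
    using grab_units(2) by (metis diff_le_self)
  then show ?thesis
    using grab_round_outcome(1)[OF assms] vhat_nonneg
    by (simp add: round_price_def mult_left_mono)
qed

lemma finite_grab_rounds: "finite grab_rounds"
  using grab_rounds_at_most_one by (elim disjE exE) (simp_all only: finite.emptyI finite_insert)

lemma sum_grab_rounds_price_le:
  "(\<Sum>t\<in>grab_rounds. round_price n m prio dev t) \<le> vhat/2 * real (sstar S)"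
  using grab_rounds_at_most_one
proof (elim disjE exE)
  assume "grab_rounds = {}"
  then show ?thesis using vhat_nonneg by (simp only: sum.empty) simp
next
  fix t assume grab_t: "grab_rounds = {t}"
  then have "t \<in> grab_rounds" by (simp only: singletonI)
  then have "round_price n m prio dev t \<le> vhat/2 * real (sstar S)" by (rule grab_round_price_le)
  then show ?thesis unfolding grab_t by simp
qed

lemma payment_dev_le:
  "payment n m prio dev i \<le> payment n m prio b i + vhat/2 * real (sstar S)"
proof -
  let ?P = "paid_rounds n m prio b i" and ?P' = "paid_rounds n m prio dev i"
  let ?price = "round_price n m prio b" and ?price' = "round_price n m prio dev"
  have n_pos: "0 < n" using bidder by simp
  have kept: "?P' - grab_rounds \<subseteq> ?P"
  proof
    fix t assume "t \<in> ?P' - grab_rounds"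
    then have "t \<in> ?P'" and "\<not> fst (b i (play n m prio b t)) < vhat/2" by simp_all
    then show "t \<in> ?P" by (rule paid_round_dev_keep(1))
  qed
  have fin_P: "finite ?P" using finite_paid_rounds[OF n_pos valid] .
  have fin_P': "finite ?P'"
    using finite_Diff2[OF finite_grab_rounds] finite_subset[OF kept fin_P] by (rule iffD1)
  have grab_sub: "grab_rounds \<subseteq> ?P'" by (rule Collect_restrict)
  have payment_split: "payment n m prio dev i = sum ?price' (?P' - grab_rounds) + sum ?price' grab_rounds"
    unfolding payment_eq_sum_round_price using sum.subset_diff[OF grab_sub fin_P'] .
  have kept_prices: "sum ?price' (?P' - grab_rounds) = sum ?price (?P' - grab_rounds)"
  proof (rule sum.cong)
    fix t assume "t \<in> ?P' - grab_rounds"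
    then have "t \<in> ?P'" and "\<not> fst (b i (play n m prio b t)) < vhat/2" by simp_all
    then show "?price' t = ?price t" by (rule paid_round_dev_keep(2))
  qed (rule refl)
  have "sum ?price (?P' - grab_rounds) \<le> payment n m prio b i"
    unfolding payment_eq_sum_round_price
    using round_price_nonneg[OF n_pos valid] by (rule sum_mono2[OF fin_P kept])
  then show ?thesis
    using payment_split kept_prices sum_grab_rounds_price_le by linarith
qed

end

theorem mainTheorem7:
  fixes n m i :: nat and S :: "nat set" and vhat :: real
    and b :: "nat \<Rightarrow> strat" and prio :: "hist \<Rightarrow> nat \<Rightarrow> nat"
    and pick :: "nat set \<Rightarrow> nat \<Rightarrow> nat set"
  assumes "i < n"
    and "S \<subseteq> {..<m}"
    and "0 \<le> vhat"
    and "\<forall>j<n. valid_strategy m (b j)"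
    and "\<forall>h. inj_on (prio h) {..<n}"
    and "\<forall>A k. finite A \<and> k \<le> card A \<longrightarrow> pick A k \<subseteq> A \<and> card (pick A k) = k"
    and "sstar S \<le> card (items_won n m prio (b(i := core_deviation m S vhat pick i (b i))) i \<inter> S)"
  shows "utility n m prio (b(i := core_deviation m S vhat pick i (b i))) i (ch_val vhat S)
           \<ge> 1/2 * real (sstar S) * vhat - payment n m prio b i"
proof -
  let ?dev = "b(i := core_deviation m S vhat pick i (b i))"
  have "vhat * real (sstar S) \<le> ch_val vhat S (items_won n m prio ?dev i)"
    using assms(3,7) by (simp add: ch_val_def mult_left_mono)
  moreover have "payment n m prio ?dev i \<le> payment n m prio b i + vhat/2 * real (sstar S)"
    using payment_dev_le[OF assms(1-6)] .
  ultimately show ?thesis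
    unfolding utility_def by (simp add: field_simps)
qed

end
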